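(* Let $q>3$ be prime, $A\in\mathbb{F}_q[T]$ monic irreducible with $a=\deg A$, $t\in\mathbb{R}^\times$, and $\psi\in\mathcal{C}_0^\infty(\mathbb{R}_{>0})$. Define $H(s)=\sum_{n\in\mathbb{Z}}\psi(q^n)q^{-ns}$, $c(n,0,s)=q^{ns}+\frac{q^{n(1-s)+1-2as}}{1-q^{-2as}}$, and \[ \mathcal{I}_{1} = \log q \int_{-\frac{\pi i}{\log q}}^{\frac{\pi i}{\log q}} H(s) \sum_{n \in \mathbb{Z}} q^{ns} \left|c \left(n, 0, \tfrac{1}{2}+it \right) \right|^{2} \frac{ds}{2\pi i}, \] the contour being along the imaginary axis. Then $\mathcal{I}_1\ll 1$.
   Context: $c(n,0,s)$ is the constant term of the Fourier--Whittaker expansion at $\infty$ of the Eisenstein series $E(g,s)=\sum_{\gamma\in\Gamma_\infty\backslash\Gamma_0(A)}\left(|\det(\gamma g)|/h((0,1)\gamma g)^2\right)^s$ for $\Gamma_0(A)$ at $g=\begin{pmatrix}T^n&x\\0&1\end{pmatrix}$. The bound is uniform as $A$ varies. *)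

theory Defs
  imports "HOL-Analysis.Analysis" "HOL-Computational_Algebra.Polynomial"
begin

definition qpow :: "nat \<Rightarrow> complex \<Rightarrow> complex" where
  "qpow q z = exp (z * of_real (ln (real q)))"

definition smooth_compact_pos :: "(real \<Rightarrow> complex) \<Rightarrow> bool" where
  "smooth_compact_pos psi \<longleftrightarrow>
     (\<exists>D :: nat \<Rightarrow> real \<Rightarrow> complex. D 0 = psi \<and>
        (\<forall>k x. (D k has_vector_derivative D (Suc k) x) (at x))) \<and>
     (\<exists>a b. 0 < a \<and> a \<le> b \<and> (\<forall>x. x \<notin> {a..b} \<longrightarrow> psi x = 0))"

text \<open>H(s) = sum over n in Z of psi(q^n) q^(-ns)  (a finite sum by compact support).\<close>
definition Hfun :: "nat \<Rightarrow> (real \<Rightarrow> complex) \<Rightarrow> complex \<Rightarrow> complex" where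
  "Hfun q psi s = (\<Sum>\<^sub>\<infinity>n::int. psi (real q powr of_int n) * qpow q (- of_int n * s))"

definition cterm :: "nat \<Rightarrow> nat \<Rightarrow> int \<Rightarrow> complex \<Rightarrow> complex" where
  "cterm q a n s = qpow q (of_int n * s)
     + qpow q (of_int n * (1 - s) + 1 - 2 * of_nat a * s) / (1 - qpow q (- 2 * of_nat a * s))"

text \<open>I_1 = log q * int_{-pi i/log q}^{pi i/log q} H(s) sum_n q^(ns) |c(n,0,1/2+it)|^2 ds/(2 pi i),
  along the imaginary axis s = i y (so ds/(2 pi i) = dy/(2 pi)), with the sum over n taken
  outside the integral (the inner series does not converge pointwise).\<close>
definition I1 :: "nat \<Rightarrow> (real \<Rightarrow> complex) \<Rightarrow> nat \<Rightarrow> real \<Rightarrow> complex" where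
  "I1 q psi a t = (\<Sum>\<^sub>\<infinity>n::int.
     (of_real (ln (real q)) *
        integral {- pi / ln (real q) .. pi / ln (real q)}
          (\<lambda>y. Hfun q psi (\<i> * of_real y) * qpow q (of_int n * (\<i> * of_real y)) / (2 * of_real pi)))
     * of_real ((cmod (cterm q a n (1/2 + \<i> * of_real t)))\<^sup>2))"

end

theory Submission
  imports Defs
begin

text \<open>On the imaginary axis, \<open>H(iy)\<close> is a trigonometric polynomial in \<open>y\<close> of period
  \<open>2 pi / log q\<close> whose coefficients are the finitely many nonzero values \<open>psi(q^n)\<close>, so
  integrating \<open>H(iy) q^(iny)\<close> over one period picks out \<open>psi(q^n) / log q\<close> and \<open>I_1\<close> collapses
  to the finite sum \<open>sum_n psi(q^n) |c(n,0,1/2+it)|^2\<close>. On the critical line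
  \<open>|1 - q^(-2as)| >= 1 - q^(-a) >= 1/2\<close>, hence \<open>|c(n,0,1/2+it)| <= 3 q^(n/2)\<close> uniformly in
  \<open>a\<close> and \<open>t\<close>.\<close>

lemma has_integral_exp_int_period:
  fixes L :: real and k :: int
  assumes L: "L > 0"
  shows "((\<lambda>y::real. exp (complex_of_real y * (\<i> * of_int k * of_real L))) has_integral
          (if k = 0 then of_real (2 * pi / L) else 0)) {-pi/L..pi/L}"
proof (cases "k = 0")
  case True
  have "((\<lambda>y::real. 1::complex) has_integral (Henstock_Kurzweil_Integration.content {-pi/L..pi/L} *\<^sub>R 1)) {-pi/L..pi/L}"
    by (rule has_integral_const_real)
  moreover have "Henstock_Kurzweil_Integration.content {-pi/L..pi/L} = 2 * pi / L"
    using L by (simp add: field_simps)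
  ultimately show ?thesis
    using True by (simp add: scaleR_conv_of_real)
next
  case False
  define c where "c = \<i> * of_int k * of_real L"
  have "c \<noteq> 0"
    using False L by (simp add: c_def)
  have antiderivative: "((\<lambda>y::real. exp (complex_of_real y * c) / c)
      has_vector_derivative exp (complex_of_real y * c)) (at y within S)" for y S
  proof -
    have "((\<lambda>y::real. exp (y *\<^sub>R c) * (1 / c))
        has_vector_derivative exp (y *\<^sub>R c) * c * (1 / c)) (at y within S)"
      by (intro has_vector_derivative_mult_left exp_scaleR_has_vector_derivative_right)
    then show ?thesis
      using \<open>c \<noteq> 0\<close> by (simp add: scaleR_conv_of_real)
  qed
  have "((\<lambda>y::real. exp (complex_of_real y * c)) has_integral
      (exp (complex_of_real (pi/L) * c) / c - exp (complex_of_real (-pi/L) * c) / c)) {-pi/L..pi/L}"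
    using L by (intro fundamental_theorem_of_calculus antiderivative) (simp add: field_simps)
  moreover have shift: "complex_of_real (pi/L) * c = complex_of_real (-pi/L) * c + (2 * of_int k * pi) * \<i>"
    using L by (simp add: c_def field_simps)
  have "exp (complex_of_real (pi/L) * c) = exp (complex_of_real (-pi/L) * c)"
    unfolding shift exp_add using exp_integer_2pi[of "of_int k"] by simp
  ultimately show ?thesis
    using False by (simp add: c_def)
qed

lemma norm_qpow: "q > 0 \<Longrightarrow> cmod (qpow q z) = real q powr Re z"
  by (simp add: qpow_def powr_def)

lemma finite_nonzero_at_int_powers:
  fixes f :: "real \<Rightarrow> 'b::zero"
  assumes q: "q > 1" and a: "a > 0" and supp: "\<And>x. x \<notin> {a..b} \<Longrightarrow> f x = 0"
  shows "finite {m::int. f (q powr of_int m) \<noteq> 0}"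
proof (rule finite_subset)
  show "{m::int. f (q powr of_int m) \<noteq> 0} \<subseteq> {\<lfloor>log q a\<rfloor>..\<lceil>log q b\<rceil>}"
  proof
    fix m :: int
    assume "m \<in> {m. f (q powr of_int m) \<noteq> 0}"
    then have m: "q powr of_int m \<in> {a..b}"
      using supp by blast
    have "log q a \<le> of_int m" "of_int m \<le> log q b"
      using m a q by (simp_all add: log_le_iff le_log_iff)
    then show "m \<in> {\<lfloor>log q a\<rfloor>..\<lceil>log q b\<rceil>}"
      by (auto simp: floor_le_iff le_ceiling_iff)
  qed
qed simp

lemma Hfun_eq_finite_sum:
  assumes "finite S" "\<And>m. m \<notin> S \<Longrightarrow> psi (real q powr of_int m) = 0"
  shows "Hfun q psi s = (\<Sum>m\<in>S. psi (real q powr of_int m) * qpow q (- of_int m * s))"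
proof -
  have "Hfun q psi s = infsum (\<lambda>m::int. psi (real q powr of_int m) * qpow q (- of_int m * s)) S"
    unfolding Hfun_def by (rule infsum_cong_neutral) (use assms in auto)
  then show ?thesis
    using assms by simp
qed

lemma Hfun_Fourier_coefficient:
  assumes q: "q > 1" and S: "finite S" "\<And>m. m \<notin> S \<Longrightarrow> psi (real q powr of_int m) = 0"
  shows "of_real (ln (real q)) *
        integral {- pi / ln (real q) .. pi / ln (real q)}
          (\<lambda>y. Hfun q psi (\<i> * of_real y) * qpow q (of_int n * (\<i> * of_real y)) / (2 * of_real pi))
     = psi (real q powr of_int n)"
proof -
  define L where "L = ln (real q)"
  have L: "L > 0"
    using q by (simp add: L_def)
  have qpow_product: "qpow q (- of_int m * (\<i> * of_real y)) * qpow q (of_int n * (\<i> * of_real y))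
      = exp (complex_of_real y * (\<i> * of_int (n - m) * of_real L))" for m y
    unfolding qpow_def exp_add[symmetric] L_def by (simp add: algebra_simps)
  have integrand: "Hfun q psi (\<i> * of_real y) * qpow q (of_int n * (\<i> * of_real y)) / (2 * of_real pi)
      = (\<Sum>m\<in>S. psi (real q powr of_int m) / (2 * of_real pi) *
            exp (complex_of_real y * (\<i> * of_int (n - m) * of_real L)))" for y
  proof -
    have "Hfun q psi (\<i> * of_real y)
        = (\<Sum>m\<in>S. psi (real q powr of_int m) * qpow q (- of_int m * (\<i> * of_real y)))"
      using S by (rule Hfun_eq_finite_sum)
    then have "Hfun q psi (\<i> * of_real y) * qpow q (of_int n * (\<i> * of_real y)) / (2 * of_real pi)
      = (\<Sum>m\<in>S. psi (real q powr of_int m) / (2 * of_real pi) *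
          (qpow q (- of_int m * (\<i> * of_real y)) * qpow q (of_int n * (\<i> * of_real y))))"
      by (simp add: sum_distrib_left sum_distrib_right sum_divide_distrib algebra_simps)
    then show ?thesis
      by (simp only: qpow_product)
  qed
  have "((\<lambda>y. Hfun q psi (\<i> * of_real y) * qpow q (of_int n * (\<i> * of_real y)) / (2 * of_real pi))
     has_integral (\<Sum>m\<in>S. psi (real q powr of_int m) / (2 * of_real pi) *
            (if n - m = 0 then of_real (2 * pi / L) else 0))) {-pi/L..pi/L}"
    unfolding integrand
    by (intro has_integral_sum S has_integral_mult_right has_integral_exp_int_period L)
  moreover have "(\<Sum>m\<in>S. psi (real q powr of_int m) / (2 * of_real pi) *
            (if n - m = 0 then of_real (2 * pi / L) else 0))
      = (\<Sum>m\<in>S. if m = n then psi (real q powr of_int n) / of_real L else 0)"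
    by (intro sum.cong) auto
  moreover have "\<dots> = psi (real q powr of_int n) / of_real L"
    using S by (auto simp: sum.delta')
  ultimately have "((\<lambda>y. Hfun q psi (\<i> * of_real y) * qpow q (of_int n * (\<i> * of_real y)) / (2 * of_real pi))
     has_integral psi (real q powr of_int n) / of_real L) {-pi/L..pi/L}"
    by simp
  then have "integral {-pi/L..pi/L}
      (\<lambda>y. Hfun q psi (\<i> * of_real y) * qpow q (of_int n * (\<i> * of_real y)) / (2 * of_real pi))
     = psi (real q powr of_int n) / of_real L"
    by (rule integral_unique)
  then show ?thesis
    using L by (simp add: L_def del: minus_divide_left)
qed

lemma I1_eq_finite_sum:
  assumes q: "q > 1" and S: "finite S" "\<And>m. m \<notin> S \<Longrightarrow> psi (real q powr of_int m) = 0"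
  shows "I1 q psi a t = (\<Sum>n\<in>S. psi (real q powr of_int n) *
           of_real ((cmod (cterm q a n (1/2 + \<i> * of_real t)))\<^sup>2))"
proof -
  have "I1 q psi a t = infsum (\<lambda>n::int. psi (real q powr of_int n) *
           of_real ((cmod (cterm q a n (1/2 + \<i> * of_real t)))\<^sup>2)) UNIV"
    unfolding I1_def by (intro infsum_cong arg_cong2[where f="(*)"] Hfun_Fourier_coefficient[where S=S and psi=psi, OF q S] refl)
  also have "\<dots> = infsum (\<lambda>n::int. psi (real q powr of_int n) *
           of_real ((cmod (cterm q a n (1/2 + \<i> * of_real t)))\<^sup>2)) S"
    by (rule infsum_cong_neutral) (use S in auto)
  finally show ?thesis
    using S by simp
qed

lemma norm_cterm_critical_line_le:
  assumes q: "q \<ge> 2"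
  shows "cmod (cterm q a n (1/2 + \<i> * of_real t)) \<le> 3 * real q powr (of_int n / 2)"
proof -
  define s where "s = 1/2 + \<i> * complex_of_real t"
  define x where "x = real q powr (of_int n / 2)"
  have first: "cmod (qpow q (of_int n * s)) = x"
    using q by (simp add: norm_qpow s_def x_def)
  show ?thesis
  proof (cases "a = 0")
    case True
    \<comment> \<open>the denominator \<open>1 - q^0\<close> vanishes, and division by zero kills the second term\<close>
    then have "cterm q a n s = qpow q (of_int n * s)"
      by (simp add: cterm_def qpow_def)
    then show ?thesis
      using first by (simp add: s_def x_def)
  next
    case False
    have "real q powr (- real a) \<le> real q powr (-1)"
      using False q by (intro powr_mono) auto
    also have "\<dots> \<le> 1/2"
      using q by (simp add: powr_minus_divide)
    finally have "real q powr (- real a) \<le> 1/2" .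
    moreover have "cmod (1 - qpow q (- 2 * of_nat a * s)) \<ge> 1 - cmod (qpow q (- 2 * of_nat a * s))"
      using norm_triangle_ineq2[of 1 "qpow q (- 2 * of_nat a * s)"] by simp
    moreover have "cmod (qpow q (- 2 * of_nat a * s)) = real q powr (- real a)"
      using q by (simp add: norm_qpow s_def)
    ultimately have denominator: "cmod (1 - qpow q (- 2 * of_nat a * s)) \<ge> 1/2"
      by linarith
    have numerator: "cmod (qpow q (of_int n * (1 - s) + 1 - 2 * of_nat a * s))
        = x * real q powr (1 - real a)"
      using q by (simp add: norm_qpow s_def x_def powr_add[symmetric] algebra_simps)
    have "real q powr (1 - real a) \<le> 1"
      using False q powr_mono[of "1 - real a" 0 "real q"] by auto
    then have "cmod (qpow q (of_int n * (1 - s) + 1 - 2 * of_nat a * s)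
        / (1 - qpow q (- 2 * of_nat a * s))) \<le> x / (1/2)"
      unfolding norm_divide numerator
      using denominator by (intro frac_le mult_le_one) (auto simp: x_def intro: mult_left_le)
    then have "cmod (qpow q (of_int n * (1 - s) + 1 - 2 * of_nat a * s)
        / (1 - qpow q (- 2 * of_nat a * s))) \<le> 2 * x"
      by simp
    then show ?thesis
      using first norm_triangle_ineq[of "qpow q (of_int n * s)"
          "qpow q (of_int n * (1 - s) + 1 - 2 * of_nat a * s) / (1 - qpow q (- 2 * of_nat a * s))"]
      unfolding cterm_def s_def[symmetric] x_def[symmetric] by linarith
  qed
qed

lemma norm_I1_le:
  assumes q: "q \<ge> 2" and S: "finite S" "\<And>m. m \<notin> S \<Longrightarrow> psi (real q powr of_int m) = 0"
  shows "cmod (I1 q psi a t) \<le> (\<Sum>n\<in>S. cmod (psi (real q powr of_int n)) * (3 * real q powr (of_int n / 2))\<^sup>2)"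
proof -
  have "I1 q psi a t = (\<Sum>n\<in>S. psi (real q powr of_int n) *
           of_real ((cmod (cterm q a n (1/2 + \<i> * of_real t)))\<^sup>2))"
    using q S by (intro I1_eq_finite_sum) auto
  then have "cmod (I1 q psi a t) \<le> (\<Sum>n\<in>S. cmod (psi (real q powr of_int n)) *
          (cmod (cterm q a n (1/2 + \<i> * of_real t)))\<^sup>2)"
    using norm_sum[of "\<lambda>n. psi (real q powr of_int n) *
           of_real ((cmod (cterm q a n (1/2 + \<i> * of_real t)))\<^sup>2)" S]
    by (simp add: norm_mult del: of_real_power)
  also have "\<dots> \<le> (\<Sum>n\<in>S. cmod (psi (real q powr of_int n)) * (3 * real q powr (of_int n / 2))\<^sup>2)"
    using norm_cterm_critical_line_le[OF q]
    by (intro sum_mono mult_left_mono power_mono) auto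
  finally show ?thesis .
qed

text \<open>The bound is uniform in the degree.\<close>

theorem lemma3p7:
  fixes q :: nat and psi :: "real \<Rightarrow> complex"
  assumes "prime q" and "q > 3"
    and "CARD('a::{field,finite}) = q"
    and "smooth_compact_pos psi"
  shows "\<exists>C::real. \<forall>(A::'a poly) (t::real).
           lead_coeff A = 1 \<and> irreducible A \<and> t \<noteq> 0 \<longrightarrow>
           cmod (I1 q psi (degree A) t) \<le> C"
proof -
  have q: "q \<ge> 2"
    using \<open>q > 3\<close> by simp
  obtain a b where "a > 0" "\<And>x. x \<notin> {a..b} \<Longrightarrow> psi x = 0"
    using \<open>smooth_compact_pos psi\<close> unfolding smooth_compact_pos_def by blast
  then have "finite {m::int. psi (real q powr of_int m) \<noteq> 0}"
    using q by (intro finite_nonzero_at_int_powers) auto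
  then show ?thesis
    using norm_I1_le[OF q] by blast
qed

end
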